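(* Let $(\Lambda,\Pi,\perp,\mathrm{push})$ be a realizability lattice equipped with a map $\mathrm{app}:\Lambda\times\Lambda\to\Lambda$, $(t,s)\mapsto ts$. The following are equivalent: (1) for all $t,s\in\Lambda$, $\pi\in\Pi$: if $t\perp s\cdot\pi$ then $ts\perp\pi$; (2) $P\ast L\subseteq P\,\clubsuit\,L$ for all $L\subseteq\Lambda$, $P\subseteq\Pi$; (3) $P\ast_\perp L\subseteq P\,\clubsuit\,L$ for all $L\subseteq\Lambda$, $P\subseteq\Pi$; (4) for all $P\subseteq\Pi$, $L\subseteq\Lambda$: if $t\in{}^\perp P$ and $\ell\in L$ then $t\ell$ is orthogonal to every element of $P\ast L$ (and hence to every element of $P\ast_\bullet L\subseteq P\ast L$).
   Context: A realizability lattice consists of sets $\Lambda,\Pi$, a relation $\perp\subseteq\Lambda\times\Pi$ (write $t\perp\pi$) and a map $\mathrm{push}:\Lambda\times\Pi\to\Pi$, written $t\cdot\pi$. Polars: $L^\perp=\{\pi:\forall t\in L,\ t\perp\pi\}$, ${}^\perp P=\{t:\forall\pi\in P,\ t\perp\pi\}$; $\overline P=({}^\perp P)^\perp$. Define $P\ast L=\{\pi\in\Pi: t\cdot\pi\in P\ \forall t\in L\}$, $P\ast_\perp L=\overline{P\ast L}$, $P\ast_\bullet L=\{\pi\in\Pi:t\cdot\pi'\in P\ \forall t\in L,\ \pi'\in\overline{\{\pi\}}\}$, and $P\,\clubsuit\,L=(\{t\ell: t\in{}^\perp P,\ \ell\in L\})^\perp$. *)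

theory Defs
  imports Main
begin

text \<open>A realizability lattice: terms of type 'l (Lambda), stacks of type 'p (Pi),
  orthogonality relation orth, and push :: 'l => 'p => 'p (written t . pi).\<close>

definition lpolar :: "('l \<Rightarrow> 'p \<Rightarrow> bool) \<Rightarrow> 'l set \<Rightarrow> 'p set" where
  "lpolar orth L = {\<pi>. \<forall>t\<in>L. orth t \<pi>}"

definition ppolar :: "('l \<Rightarrow> 'p \<Rightarrow> bool) \<Rightarrow> 'p set \<Rightarrow> 'l set" where
  "ppolar orth P = {t. \<forall>\<pi>\<in>P. orth t \<pi>}"

definition pclosure :: "('l \<Rightarrow> 'p \<Rightarrow> bool) \<Rightarrow> 'p set \<Rightarrow> 'p set" where
  "pclosure orth P = lpolar orth (ppolar orth P)"

definition ast :: "('l \<Rightarrow> 'p \<Rightarrow> 'p) \<Rightarrow> 'p set \<Rightarrow> 'l set \<Rightarrow> 'p set" where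
  "ast push P L = {\<pi>. \<forall>t\<in>L. push t \<pi> \<in> P}"

definition ast_perp :: "('l \<Rightarrow> 'p \<Rightarrow> bool) \<Rightarrow> ('l \<Rightarrow> 'p \<Rightarrow> 'p) \<Rightarrow> 'p set \<Rightarrow> 'l set \<Rightarrow> 'p set" where
  "ast_perp orth push P L = pclosure orth (ast push P L)"

definition ast_bullet :: "('l \<Rightarrow> 'p \<Rightarrow> bool) \<Rightarrow> ('l \<Rightarrow> 'p \<Rightarrow> 'p) \<Rightarrow> 'p set \<Rightarrow> 'l set \<Rightarrow> 'p set" where
  "ast_bullet orth push P L =
     {\<pi>. \<forall>t\<in>L. \<forall>\<pi>'\<in>pclosure orth {\<pi>}. push t \<pi>' \<in> P}"

definition club :: "('l \<Rightarrow> 'p \<Rightarrow> bool) \<Rightarrow> ('l \<Rightarrow> 'l \<Rightarrow> 'l) \<Rightarrow> 'p set \<Rightarrow> 'l set \<Rightarrow> 'p set" where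
  "club orth app P L = lpolar orth {app t l | t l. t \<in> ppolar orth P \<and> l \<in> L}"

end

theory Submission
  imports Defs
begin

text \<open>All four conditions say that \<open>ts \<perp> \<pi>\<close> whenever \<open>t \<perp> s\<cdot>\<pi>\<close>: for (1) \<open>\<Rightarrow>\<close> (2) and (4)
  this is immediate from the definitions, and conversely \<open>\<pi> \<in> {s\<cdot>\<pi>} \<ast> {s}\<close> while
  \<open>t \<in> \<^sup>\<perp>{s\<cdot>\<pi>}\<close>. Closing \<open>P \<ast> L\<close> to \<open>P \<ast>\<^sub>\<perp> L\<close> changes nothing because \<open>P \<clubsuit> L\<close> is a polar,
  hence closed, and the extra requirement on \<open>P \<ast>\<^sub>\<bullet> L\<close> in (4) is free since
  \<open>P \<ast>\<^sub>\<bullet> L \<subseteq> P \<ast> L\<close>.\<close>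

lemma pclosure_subset: "P \<subseteq> pclosure orth P"
  unfolding pclosure_def lpolar_def ppolar_def by blast

lemma pclosure_subset_lpolar:
  "P \<subseteq> lpolar orth L \<Longrightarrow> pclosure orth P \<subseteq> lpolar orth L"
  unfolding pclosure_def lpolar_def ppolar_def by blast

lemma ast_bullet_subset_ast: "ast_bullet orth push P L \<subseteq> ast push P L"
  unfolding ast_bullet_def ast_def using pclosure_subset[of "{_}" orth] by blast

lemma ast_perp_subset_club_iff:
  "ast_perp orth push P L \<subseteq> club orth app P L \<longleftrightarrow> ast push P L \<subseteq> club orth app P L"
  unfolding ast_perp_def club_def
  using pclosure_subset[of "ast push P L" orth] pclosure_subset_lpolar[of "ast push P L" orth]
  by blast

lemma ast_subset_club_iff:
  "ast push P L \<subseteq> club orth app P L \<longleftrightarrow>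
     (\<forall>t\<in>ppolar orth P. \<forall>l\<in>L. \<forall>\<pi>\<in>ast push P L. orth (app t l) \<pi>)"
  unfolding club_def lpolar_def by auto

lemma app_orth_iff_ast_subset_club:
  "(\<forall>t s \<pi>. orth t (push s \<pi>) \<longrightarrow> orth (app t s) \<pi>) \<longleftrightarrow>
     (\<forall>L P. ast push P L \<subseteq> club orth app P L)"
proof
  assume app_orth: "\<forall>t s \<pi>. orth t (push s \<pi>) \<longrightarrow> orth (app t s) \<pi>"
  show "\<forall>L P. ast push P L \<subseteq> club orth app P L"
    unfolding ast_subset_club_iff
  proof (intro allI ballI)
    fix L P t l \<pi>
    assume "t \<in> ppolar orth P" "l \<in> L" "\<pi> \<in> ast push P L"
    then have "orth t (push l \<pi>)"
      by (simp add: ppolar_def ast_def)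
    with app_orth show "orth (app t l) \<pi>" by blast
  qed
next
  assume ast_club: "\<forall>L P. ast push P L \<subseteq> club orth app P L"
  show "\<forall>t s \<pi>. orth t (push s \<pi>) \<longrightarrow> orth (app t s) \<pi>"
  proof (intro allI impI)
    fix t s \<pi>
    assume "orth t (push s \<pi>)"
    then have "t \<in> ppolar orth {push s \<pi>}"
      by (simp add: ppolar_def)
    moreover have "\<pi> \<in> ast push {push s \<pi>} {s}"
      by (simp add: ast_def)
    moreover have "ast push {push s \<pi>} {s} \<subseteq> club orth app {push s \<pi>} {s}"
      using ast_club by blast
    ultimately show "orth (app t s) \<pi>"
      unfolding ast_subset_club_iff by blast
  qed
qed

theorem mainTheorem4:
  fixes orth :: "'l \<Rightarrow> 'p \<Rightarrow> bool"
    and push :: "'l \<Rightarrow> 'p \<Rightarrow> 'p"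
    and app :: "'l \<Rightarrow> 'l \<Rightarrow> 'l"
  defines "C1 \<equiv> (\<forall>t s \<pi>. orth t (push s \<pi>) \<longrightarrow> orth (app t s) \<pi>)"
    and "C2 \<equiv> (\<forall>(L::'l set) (P::'p set). ast push P L \<subseteq> club orth app P L)"
    and "C3 \<equiv> (\<forall>(L::'l set) (P::'p set). ast_perp orth push P L \<subseteq> club orth app P L)"
    and "C4 \<equiv> (\<forall>(P::'p set) (L::'l set) t l. t \<in> ppolar orth P \<and> l \<in> L \<longrightarrow>
               (\<forall>\<pi>\<in>ast push P L. orth (app t l) \<pi>) \<and>
               (\<forall>\<pi>\<in>ast_bullet orth push P L. orth (app t l) \<pi>))"
  shows "(C1 \<longleftrightarrow> C2) \<and> (C2 \<longleftrightarrow> C3) \<and> (C3 \<longleftrightarrow> C4)"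
proof -
  have "C1 \<longleftrightarrow> C2"
    unfolding C1_def C2_def by (rule app_orth_iff_ast_subset_club)
  moreover have "C2 \<longleftrightarrow> C3"
    unfolding C2_def C3_def by (simp add: ast_perp_subset_club_iff)
  moreover have "C2 \<longleftrightarrow> C4"
    unfolding C2_def C4_def ast_subset_club_iff
    using ast_bullet_subset_ast by (meson subsetD)
  ultimately show ?thesis by blast
qed

end
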